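(* Let $t$ be a partial function from $X^M$ to $X$ which is thrifty and belongs to $\mathscr C_J$. Then for every $n\in\omega$ the set $t^{-1}[\omega\times\{n\}]$ is bounded.
   Context: $X=\omega\times\omega$, elements $(a|b)$ ($x$-coordinate $a$, $y$-coordinate $b$); $M=\{1,\dots,m\}$. $J$ is the ideal of subsets of $X$ meeting each line $\omega\times\{n\}$ in a finite set; $\mathscr C_J$ is the set of finitary operations $f:X^k\to X$ with $f[A^k]\in J$ for all $A\in J$; a partial function from $X^M$ to $X$ is in $\mathscr C_J$ iff it has a total extension in $\mathscr C_J$. $B^M_k=\{u\in X^M:\exists i\in M\,((u_i)^y<k)\}$; a subset of $X^M$ is bounded iff contained in some $B^M_k$; $t$ is thrifty iff $t^{-1}[d]$ is bounded for all $d\in X$. *)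

theory Defs
  imports Main
begin

type_synonym pt = "nat \<times> nat"   (* (a|b): fst = x-coordinate a, snd = y-coordinate b *)

(* X^M with M = {1..m} is represented by lists of length m; coordinate i in M is u ! (i-1) *)
definition XM :: "nat \<Rightarrow> pt list set" where
  "XM m = {u. length u = m}"

definition J :: "pt set set" where
  "J = {A. \<forall>n. finite {a. (a, n) \<in> A}}"

definition CJ_total :: "nat \<Rightarrow> (pt list \<Rightarrow> pt) \<Rightarrow> bool" where
  "CJ_total m f \<longleftrightarrow> (\<forall>A\<in>J. f ` {u \<in> XM m. set u \<subseteq> A} \<in> J)"

definition partial_op :: "nat \<Rightarrow> (pt list \<Rightarrow> pt option) \<Rightarrow> bool" where
  "partial_op m t \<longleftrightarrow> dom t \<subseteq> XM m"

definition CJ_partial :: "nat \<Rightarrow> (pt list \<Rightarrow> pt option) \<Rightarrow> bool" where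
  "CJ_partial m t \<longleftrightarrow> (\<exists>f. CJ_total m f \<and> (\<forall>u\<in>dom t. t u = Some (f u)))"

definition B :: "nat \<Rightarrow> nat \<Rightarrow> pt list set" where
  "B m k = {u \<in> XM m. \<exists>i<m. snd (u ! i) < k}"

definition bounded_set :: "nat \<Rightarrow> pt list set \<Rightarrow> bool" where
  "bounded_set m S \<longleftrightarrow> (\<exists>k. S \<subseteq> B m k)"

definition preim :: "(pt list \<Rightarrow> pt option) \<Rightarrow> pt set \<Rightarrow> pt list set" where
  "preim t D = {u. \<exists>d\<in>D. t u = Some d}"

definition thrifty :: "nat \<Rightarrow> (pt list \<Rightarrow> pt option) \<Rightarrow> bool" where
  "thrifty m t \<longleftrightarrow> (\<forall>d. bounded_set m (preim t {d}))"

end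

theory Submission
  imports Defs
begin

(* Suppose the preimage S of the line  omega x {n}  under t is unbounded.
   Thriftiness gives, for every value d, a bound  kd d  with  t^{-1}[d] \<subseteq> B_{kd d}.
   Using unboundedness we pick recursively a sequence u_0, u_1, ... in S such that
   all coordinates of u_j lie at height \<ge> j and, for i < j, u_j avoids B_{kd (t u_i)}.
   The second property makes the values t(u_j) pairwise distinct; they all lie on the
   line of height n.  The first property makes the set A of all coordinates of all u_j
   a member of J (each line meets only the finitely many u_j with j below its height).
   A total extension f of t in C_J maps A^M into J, yet f(u_j) = t(u_j) puts infinitely
   many points of one line into f[A^M] -- a contradiction. *)

lemma B_mono: "k \<le> k' \<Longrightarrow> B m k \<subseteq> B m k'"
  unfolding B_def by fastforce

lemma coords_above_if_not_in_B:
  assumes "u \<in> XM m" and "u \<notin> B m k" and "p \<in> set u"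
  shows "k \<le> snd p"
proof -
  obtain i where "i < m" and "u ! i = p"
    using assms(1,3) unfolding XM_def by (auto simp: in_set_conv_nth)
  then show ?thesis
    using assms(1,2) unfolding B_def by (auto simp: not_less dest: spec[of _ i])
qed

lemma unbounded_sequence:
  assumes "\<not> bounded_set m S"
  obtains u where "\<And>j. u j \<in> S" and "\<And>j. u j \<notin> B m j"
    and "\<And>i j. i < j \<Longrightarrow> u j \<notin> B m (h (u i))"
proof -
  have "\<forall>k. \<exists>v. v \<in> S \<and> v \<notin> B m k"
    using assms unfolding bounded_set_def by blast
  then obtain g where g: "\<And>k. g k \<in> S \<and> g k \<notin> B m k" by metis
  define K where "K = rec_nat 0 (\<lambda>_ k. max (Suc k) (h (g k)))"
  have K_Suc: "K (Suc j) = max (Suc (K j)) (h (g (K j)))" for j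
    unfolding K_def by simp
  have K_mono: "strict_mono K"
    unfolding strict_mono_Suc_iff by (simp add: K_Suc less_max_iff_disj)
  show ?thesis
  proof
    fix j
    show "g (K j) \<in> S" using g by blast
    have "B m j \<subseteq> B m (K j)" using B_mono K_mono strict_mono_imp_increasing by blast
    then show "g (K j) \<notin> B m j" using g by blast
  next
    fix i j :: nat
    assume "i < j"
    then have "K (Suc i) \<le> K j"
      using K_mono by (simp add: strict_mono_less_eq)
    then have "B m (h (g (K i))) \<subseteq> B m (K j)"
      using B_mono K_Suc by (metis max.bounded_iff)
    then show "g (K j) \<notin> B m (h (g (K i)))" using g by blast
  qed
qed

lemma rising_union_in_J:
  assumes "\<And>j p. p \<in> set (u j) \<Longrightarrow> j \<le> snd p"
  shows "(\<Union>j. set (u j)) \<in> J"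
  unfolding J_def mem_Collect_eq
proof
  fix c
  have "{a. (a, c) \<in> (\<Union>j. set (u j))} \<subseteq> (\<Union>j\<le>c. fst ` set (u j))"
    using assms by force
  then show "finite {a. (a, c) \<in> (\<Union>j. set (u j))}"
    by (rule finite_subset) auto
qed

lemma J_no_injective_line_sequence:
  fixes v :: "nat \<Rightarrow> pt"
  assumes "C \<in> J" and "inj v" and "\<And>j. v j \<in> C" and "\<And>j. snd (v j) = n"
  shows False
proof -
  have "inj (\<lambda>j. fst (v j))"
    using assms(2,4) unfolding inj_def by (metis prod.collapse)
  then have "infinite (range (\<lambda>j. fst (v j)))"
    using finite_imageD infinite_UNIV_nat by blast
  moreover have "range (\<lambda>j. fst (v j)) \<subseteq> {a. (a, n) \<in> C}"
  proof clarify
    fix j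
    have "v j = (fst (v j), n)" using assms(4)[of j] by (cases "v j") simp
    then show "(fst (v j), n) \<in> C" using assms(3)[of j] by simp
  qed
  moreover have "finite {a. (a, n) \<in> C}"
    using assms(1) unfolding J_def by blast
  ultimately show False
    using finite_subset by blast
qed

lemma thrifty_bounds:
  assumes "thrifty m t"
  obtains kd where "\<And>u d. t u = Some d \<Longrightarrow> u \<in> B m (kd d)"
proof -
  have "\<forall>d. \<exists>k. preim t {d} \<subseteq> B m k"
    using assms unfolding thrifty_def bounded_set_def by blast
  then obtain kd where "\<And>d. preim t {d} \<subseteq> B m (kd d)" by metis
  then show ?thesis using that unfolding preim_def by blast
qed

(* Along a sequence whose j-th term avoids the thriftiness bounds of all earlier values,
   the values are pairwise distinct: equal values would put u_j into a fibre it avoids. *)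
lemma fresh_sequence_values_inj:
  fixes u :: "nat \<Rightarrow> pt list" and w :: "nat \<Rightarrow> pt"
  assumes fibre_bound: "\<And>v d. t v = Some d \<Longrightarrow> v \<in> B m (kd d)"
    and val: "\<And>j. t (u j) = Some (w j)"
    and fresh: "\<And>i j. i < j \<Longrightarrow> u j \<notin> B m (kd (w i))"
  shows "inj w"
proof -
  have "w i \<noteq> w j" if "i < j" for i j
  proof
    assume "w i = w j"
    then have "u j \<in> B m (kd (w i))" using fibre_bound val by metis
    then show False using fresh[OF that] by contradiction
  qed
  then show ?thesis
    by (intro injI) (metis linorder_neqE_nat)
qed

theorem mainTheorem10:
  fixes m :: nat and t :: "pt list \<Rightarrow> pt option"
  assumes "partial_op m t" and "thrifty m t" and "CJ_partial m t"
  shows "\<forall>n. bounded_set m (preim t (UNIV \<times> {n}))"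
proof (rule allI, rule ccontr)
  fix n
  assume "\<not> bounded_set m (preim t (UNIV \<times> {n}))"
  obtain f where f_CJ: "CJ_total m f" and f_ext: "\<And>u. u \<in> dom t \<Longrightarrow> t u = Some (f u)"
    using assms(3) unfolding CJ_partial_def by blast
  obtain kd where kd: "\<And>u d. t u = Some d \<Longrightarrow> u \<in> B m (kd d)"
    using assms(2) thrifty_bounds by blast
  obtain u where u_pre: "\<And>j. u j \<in> preim t (UNIV \<times> {n})" and u_high: "\<And>j. u j \<notin> B m j"
    and u_fresh: "\<And>i j. i < j \<Longrightarrow> u j \<notin> B m (kd (f (u i)))"
    using unbounded_sequence[OF \<open>\<not> bounded_set _ _\<close>, of "\<lambda>v. kd (f v)"] by blast
  have u_XM: "u j \<in> XM m" and u_val: "t (u j) = Some (f (u j))"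
    and u_line: "snd (f (u j)) = n" for j
  proof -
    obtain d where "t (u j) = Some d" and "snd d = n"
      using u_pre[of j] unfolding preim_def by auto
    moreover from this have "u j \<in> dom t" by blast
    ultimately show "u j \<in> XM m" "t (u j) = Some (f (u j))" "snd (f (u j)) = n"
      using assms(1) f_ext unfolding partial_op_def by auto
  qed
  have f_inj: "inj (\<lambda>j. f (u j))"
    using kd u_val u_fresh by (rule fresh_sequence_values_inj)
  define A where "A = (\<Union>j. set (u j))"
  have "A \<in> J"
    unfolding A_def
  proof (rule rising_union_in_J)
    show "j \<le> snd p" if "p \<in> set (u j)" for j p
      using coords_above_if_not_in_B[OF u_XM u_high that] .
  qed
  then have image_in_J: "f ` {v \<in> XM m. set v \<subseteq> A} \<in> J"
    using f_CJ unfolding CJ_total_def by blast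
  have "f (u j) \<in> f ` {v \<in> XM m. set v \<subseteq> A}" for j
    using u_XM unfolding A_def by blast
  from J_no_injective_line_sequence[OF image_in_J f_inj this u_line] show False .
qed

end
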